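(* Let $s\geq 3$ be an integer and let $q\in(0,1)$ be the root of $X^2-sX+1=0$ in $(0,1)$. Put $x_n=\dfrac{q^n-q^{-n}}{q-q^{-1}}$ for $n\in\mathbb{N}$ (these are integers), $x_0!=1$, $x_n!=x_1\cdots x_n$, and $\mathcal{N}(t)=\sum_{n\ge0}t^n/x_n!$. For $z\in\mathbb{C}$ and $t\in\mathbb{R}$ define $$\check z(t)=\frac{z}{\mathcal{N}(|z|^2)}\sum_{n=0}^{\infty}\frac{|z|^{2n}}{x_n!}\exp\big(i(x_{n+2}-x_{n+1})t\big).$$ Then for every $z\in\mathbb{C}$ the curve $t\mapsto\check z(t)$ is periodic with period $2\pi$.
   Context: $\check z(t)$ is the coherent-state expectation of the time-evolved lowering operator, i.e. the semi-classical phase-space trajectory for the $q$-deformed harmonic oscillator whose spectrum is $(x_{n+1})$. *)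

theory Defs
  imports "HOL-Analysis.Analysis"
begin

definition qnum :: "real \<Rightarrow> nat \<Rightarrow> real" where
  "qnum q n = (q ^ n - inverse q ^ n) / (q - inverse q)"

definition qfact :: "real \<Rightarrow> nat \<Rightarrow> real" where
  "qfact q n = (\<Prod>k\<in>{1..n}. qnum q k)"

definition qN :: "real \<Rightarrow> real \<Rightarrow> real" where
  "qN q t = (\<Sum>n. t ^ n / qfact q n)"

definition zcheck :: "real \<Rightarrow> complex \<Rightarrow> real \<Rightarrow> complex" where
  "zcheck q z t = z / complex_of_real (qN q ((cmod z)\<^sup>2)) *
     (\<Sum>n. complex_of_real ((cmod z) ^ (2 * n) / qfact q n) *
          exp (\<i> * complex_of_real ((qnum q (n + 2) - qnum q (n + 1)) * t)))"

end

theory Submission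
  imports Defs
begin

text \<open>The q-numbers satisfy the Chebyshev-type recurrence
  x(n+2) = (q + 1/q) x(n+1) - x(n) with x(0) = 0 and x(1) = 1, so they are integers
  whenever q + 1/q = s is. Hence every frequency x(n+2) - x(n+1) in the series
  defining the trajectory is an integer, and each term of the series is 2 pi-periodic.\<close>

lemma qnum_Suc_Suc:
  "qnum q (Suc (Suc n)) = (q + inverse q) * qnum q (Suc n) - qnum q n"
proof (cases "q = 0")
  case True
  then show ?thesis by (simp add: qnum_def)
next
  case False
  have "(q + inverse q) * (q ^ Suc n - inverse q ^ Suc n)
      = q ^ Suc (Suc n) - inverse q ^ Suc (Suc n)
        + (q * inverse q) * q ^ n - (q * inverse q) * inverse q ^ n"
    by (simp add: algebra_simps)
  with False have "q ^ Suc (Suc n) - inverse q ^ Suc (Suc n)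
      = (q + inverse q) * (q ^ Suc n - inverse q ^ Suc n) - (q ^ n - inverse q ^ n)"
    by simp
  then show ?thesis
    unfolding qnum_def by (simp add: diff_divide_distrib[symmetric])
qed

lemma qnum_in_Ints:
  assumes "q + inverse q \<in> \<int>"
  shows "qnum q n \<in> \<int>"
proof (induction n rule: induct_nat_012)
  case 0
  show ?case by (simp add: qnum_def)
next
  case 1
  show ?case by (cases "q = inverse q") (simp_all add: qnum_def)
next
  case (ge2 n)
  then show ?case
    using assms by (simp add: qnum_Suc_Suc)
qed

lemma exp_Ints_periodic:
  assumes "k \<in> \<int>"
  shows "exp (\<i> * complex_of_real (k * (t + 2 * pi))) = exp (\<i> * complex_of_real (k * t))"
proof -
  obtain m where "k = of_int m"
    using assms by (auto elim: Ints_cases)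
  then have "\<i> * complex_of_real (k * (t + 2 * pi))
      = \<i> * complex_of_real (k * t) + \<i> * (of_int m * (of_real pi * 2))"
    by (simp add: algebra_simps)
  then show ?thesis
    by (simp only: exp_plus_2pin)
qed

lemma zcheck_periodic:
  assumes "q + inverse q \<in> \<int>"
  shows "zcheck q z (t + 2 * pi) = zcheck q z t"
proof -
  have "qnum q (n + 2) - qnum q (n + 1) \<in> \<int>" for n
    using assms by (intro Ints_diff qnum_in_Ints)
  then show ?thesis
    unfolding zcheck_def by (simp only: exp_Ints_periodic)
qed

lemma add_inverse_eq_of_int_if_root:
  fixes q :: real
  assumes "q\<^sup>2 - of_int s * q + 1 = 0"
  shows "q + inverse q = of_int s"
proof -
  have "q \<noteq> 0"
    using assms by auto
  moreover have "q * (q + inverse q) = q * of_int s"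
    using assms \<open>q \<noteq> 0\<close> by (simp add: algebra_simps power2_eq_square)
  ultimately show ?thesis
    by simp
qed

theorem mainTheorem5:
  fixes s :: int and q :: real and z :: complex
  assumes "s \<ge> 3"
    and "0 < q" and "q < 1"
    and "q\<^sup>2 - of_int s * q + 1 = 0"
  shows "\<forall>t::real. zcheck q z (t + 2 * pi) = zcheck q z t"
proof
  fix t :: real
  have "q + inverse q \<in> \<int>"
    using add_inverse_eq_of_int_if_root[OF assms(4)] by simp
  then show "zcheck q z (t + 2 * pi) = zcheck q z t"
    by (rule zcheck_periodic)
qed

end
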